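(* In the setting of the context, the linear operator $\mathcal M:\mathbb S^n\to\mathbb S^n$ satisfies: (a) $\mathcal M$ is firmly nonexpansive with respect to the Frobenius norm, i.e., $\langle\mathcal M(H),H\rangle\ge\|\mathcal M(H)\|_F^2$ for all $H$; (b) the sequence of operators $\mathcal M^k$ converges to $\Pi_{\mathrm{Fix}(\mathcal M)}$ as $k\to\infty$; (c) $H\in\mathrm{Fix}(\mathcal M)$ if and only if $H_O=0$, $Q_\star\begin{pmatrix}H_X&0\\0&0\end{pmatrix}Q_\star^\top\in\mathcal N(\mathcal A)$, and $Q_\star\begin{pmatrix}0&0\\0&H_S\end{pmatrix}Q_\star^\top\in\mathcal R(\mathcal A^* )$; (d) $\|\mathcal M-\Pi_{\mathrm{Fix}(\mathcal M)}\|_{\mathrm{op}}<1$.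
   Context: $\mathbb S^n$: real symmetric matrices with $\langle X,Y\rangle=\operatorname{tr}(XY)$ and Frobenius norm. Data $A_1,\dots,A_m\in\mathbb S^n$ defining $\mathcal AX=(\langle A_i,X\rangle)_i$, assumed surjective; $\mathcal A^*y=\sum y_iA_i$; $\mathcal R(\mathcal A^* )$ range, $\mathcal N(\mathcal A)$ null space; $\mathcal P=\mathcal A^*(\mathcal A\mathcal A^* )^{-1}\mathcal A$, $\mathcal P^\perp=\mathrm{Id}-\mathcal P$. Let $Z_\star=X_\star-\sigma S_\star$ ($\sigma>0$) for a strictly complementary KKT point $(X_\star,y_\star,S_\star)$ of the SDP pair min $\langle C,X\rangle$ s.t. $\mathcal AX=b$, $X\succeq0$ / max $b^\top y$ s.t. $\mathcal A^*y+S=C$, $S\succeq0$ (the limit of the one-step ADMM iteration), so that for an orthogonal $Q_\star$, $Z_\star=Q_\star\operatorname{diag}(\lambda_1,\dots,\lambda_n)Q_\star^\top$ with $\lambda_1\ge\dots\ge\lambda_r>0>\lambda_{r+1}\ge\dots\ge\lambda_n$, $r=\operatorname{rank}X_\star$. $\Theta\in\mathbb R^{(n-r)\times r}$, $\Theta_{ij}=\lambda_j/(\lambda_j-\lambda_{i+r})$, $\Omega=\begin{pmatrix}E_r&\Theta^\top\\\Theta&0\end{pmatrix}$ ($E_r$ all-ones). For $H\in\mathbb S^n$ write $Q_\star^\top HQ_\star=\begin{pmatrix}H_X&H_O^\top\\H_O&H_S\end{pmatrix}$, $H_X\in\mathbb S^r$, $H_O\in\mathbb R^{(n-r)\times r}$,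 $H_S\in\mathbb S^{n-r}$. $\mathcal D(H)=Q_\star(\Omega\circ(Q_\star^\top HQ_\star))Q_\star^\top$ ($\circ$ Hadamard), $\mathcal D^\perp(H)=H-\mathcal D(H)$, $\mathcal M(H)=\mathcal P\mathcal D^\perp(H)+\mathcal P^\perp\mathcal D(H)$. $\mathrm{Fix}(\mathcal M)=\{H:\mathcal M(H)=H\}$, $\Pi_{\mathrm{Fix}(\mathcal M)}$ the orthogonal projection onto it, $\|\cdot\|_{\mathrm{op}}$ the Frobenius-induced operator norm. *)

theory Defs
  imports "HOL-Analysis.Analysis"
begin

text \<open>Symmetric matrices S^n, realised inside real^'n^'n; the Euclidean norm of
real^'n^'n is the Frobenius norm.\<close>

definition Sym :: "(real^'n^'n) set" where
  "Sym = {H. transpose H = H}"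

definition frob_inner :: "real^'n^'n \<Rightarrow> real^'n^'n \<Rightarrow> real" where
  "frob_inner X Y = trace (X ** Y)"

definition psd :: "real^'n^'n \<Rightarrow> bool" where
  "psd X \<longleftrightarrow> transpose X = X \<and> (\<forall>x. 0 \<le> x \<bullet> (X *v x))"

definition Aop :: "('m \<Rightarrow> real^'n^'n) \<Rightarrow> real^'n^'n \<Rightarrow> real^'m" where
  "Aop A X = (\<chi> i. frob_inner (A i) X)"

definition Astar :: "('m::finite \<Rightarrow> real^'n^'n) \<Rightarrow> real^'m \<Rightarrow> real^'n^'n" where
  "Astar A y = (\<Sum>i\<in>UNIV. (y $ i) *\<^sub>R A i)"

definition AAstar :: "('m::finite \<Rightarrow> real^'n^'n) \<Rightarrow> real^'m^'m" where
  "AAstar A = (\<chi> i j. frob_inner (A i) (A j))"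

definition Pop :: "('m::finite \<Rightarrow> real^'n^'n) \<Rightarrow> real^'n^'n \<Rightarrow> real^'n^'n" where
  "Pop A H = Astar A (matrix_inv (AAstar A) *v Aop A H)"

definition Pperp :: "('m::finite \<Rightarrow> real^'n^'n) \<Rightarrow> real^'n^'n \<Rightarrow> real^'n^'n" where
  "Pperp A H = H - Pop A H"

definition diagm :: "('n \<Rightarrow> real) \<Rightarrow> real^'n^'n" where
  "diagm lam = (\<chi> i j. if i = j then lam i else 0)"

text \<open>Blocks: indices with positive eigenvalue (first r) form the X-block,
indices with negative eigenvalue form the S-block.\<close>

definition Omega :: "('n \<Rightarrow> real) \<Rightarrow> real^'n^'n" where
  "Omega lam = (\<chi> i j.
     if 0 < lam i \<and> 0 < lam j then 1
     else if lam i < 0 \<and> 0 < lam j then lam j / (lam j - lam i)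
     else if 0 < lam i \<and> lam j < 0 then lam i / (lam i - lam j)
     else 0)"

definition hadamard :: "real^'n^'n \<Rightarrow> real^'n^'n \<Rightarrow> real^'n^'n" where
  "hadamard X Y = (\<chi> i j. X $ i $ j * Y $ i $ j)"

definition Dop :: "real^'n^'n \<Rightarrow> ('n \<Rightarrow> real) \<Rightarrow> real^'n^'n \<Rightarrow> real^'n^'n" where
  "Dop Q lam H = Q ** hadamard (Omega lam) (transpose Q ** H ** Q) ** transpose Q"

definition Dperp :: "real^'n^'n \<Rightarrow> ('n \<Rightarrow> real) \<Rightarrow> real^'n^'n \<Rightarrow> real^'n^'n" where
  "Dperp Q lam H = H - Dop Q lam H"

definition Mop :: "('m::finite \<Rightarrow> real^'n^'n) \<Rightarrow> real^'n^'n \<Rightarrow> ('n \<Rightarrow> real)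
                   \<Rightarrow> real^'n^'n \<Rightarrow> real^'n^'n" where
  "Mop A Q lam H = Pop A (Dperp Q lam H) + Pperp A (Dop Q lam H)"

definition FixM :: "('m::finite \<Rightarrow> real^'n^'n) \<Rightarrow> real^'n^'n \<Rightarrow> ('n \<Rightarrow> real)
                   \<Rightarrow> (real^'n^'n) set" where
  "FixM A Q lam = {H \<in> Sym. Mop A Q lam H = H}"

text \<open>Orthogonal projection onto a (closed) subspace = closest point map.\<close>

definition opnormS :: "(real^'n^'n \<Rightarrow> real^'n^'n) \<Rightarrow> real" where
  "opnormS T = (SUP H\<in>Sym. norm (T H) / norm H)"

definition blkX :: "('n \<Rightarrow> real) \<Rightarrow> real^'n^'n \<Rightarrow> real^'n^'n" where
  "blkX lam K = (\<chi> i j. if 0 < lam i \<and> 0 < lam j then K $ i $ j else 0)"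
definition blkS :: "('n \<Rightarrow> real) \<Rightarrow> real^'n^'n \<Rightarrow> real^'n^'n" where
  "blkS lam K = (\<chi> i j. if lam i < 0 \<and> lam j < 0 then K $ i $ j else 0)"
definition blkO_zero :: "('n \<Rightarrow> real) \<Rightarrow> real^'n^'n \<Rightarrow> bool" where
  "blkO_zero lam K \<longleftrightarrow> (\<forall>i j. lam i < 0 \<and> 0 < lam j \<longrightarrow> K $ i $ j = 0)"

end

theory Submission
  imports Defs
begin

text \<open>For a linear map, firm nonexpansiveness reads \<open>\<parallel>M x\<parallel>\<^sup>2 \<le> \<langle>M x, x\<rangle>\<close>, equivalently the
reflection \<open>2M - I\<close> is nonexpansive. The operator \<open>M = P(I - D) + (I - P)D\<close> is the
Douglas--Rachford average \<open>(I + R\<^sub>P\<^sub>\<bottom> R\<^sub>D)/2\<close> of two reflections: \<open>P\<close> is the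
orthogonal projector onto the range of \<open>A\<^sup>*\<close>, so \<open>R\<^sub>P\<^sub>\<bottom>\<close> is an isometry, and after the
orthogonal change of basis \<open>Q\<close> the map \<open>D\<close> is a Hadamard multiplier with weights in
\<open>[0,1]\<close>, hence firmly nonexpansive.

For a linear firmly nonexpansive map the orthogonal complement of the fixed-point subspace
is invariant, and every nonzero vector in it is strictly shortened; compactness of the unit
sphere turns this into a uniform factor \<open>c < 1\<close>, so \<open>\<parallel>M\<^sup>k - \<Pi>\<^sub>F\<^sub>i\<^sub>x\<parallel> \<le> c\<^sup>k\<close>, which gives (b) and (d).

If \<open>M H = H\<close> then \<open>\<parallel>R\<^sub>D H\<parallel> = \<parallel>H\<parallel>\<close>, which kills the off-diagonal block \<open>H\<^sub>O\<close>, where the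
weights \<open>\<Theta>\<close> lie strictly between 0 and 1. Then \<open>D\<close> keeps exactly the \<open>X\<close>-block, and
\<open>M H = H\<close> says that \<open>P\<close> annihilates the \<open>X\<close>-block and fixes the \<open>S\<close>-block, which is (c).
Strict complementarity is needed only to exclude zero eigenvalues of \<open>Z\<^sub>\<star>\<close>, so that the
two diagonal blocks cover all indices.\<close>

section \<open>Linear firmly nonexpansive maps\<close>

lemma firm_iff_norm_reflection_le:
  fixes x y :: "'a::real_inner"
  shows "(norm y)\<^sup>2 \<le> y \<bullet> x \<longleftrightarrow> norm (2 *\<^sub>R y - x) \<le> norm x"
proof -
  have "(2 *\<^sub>R y - x) \<bullet> (2 *\<^sub>R y - x) = 4 * (y \<bullet> y) - 4 * (y \<bullet> x) + x \<bullet> x"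
    by (simp add: inner_diff inner_commute[of x y])
  then show ?thesis
    unfolding norm_le power2_norm_eq_inner by linarith
qed

lemma firm_norm_diff_le:
  fixes x y :: "'a::real_inner"
  assumes "(norm y)\<^sup>2 \<le> y \<bullet> x"
  shows "(norm (y - x))\<^sup>2 \<le> (norm x)\<^sup>2 - (norm y)\<^sup>2"
proof -
  have "(norm (y - x))\<^sup>2 = (norm y)\<^sup>2 - 2 * (y \<bullet> x) + (norm x)\<^sup>2"
    by (simp add: power2_norm_eq_inner inner_diff inner_commute[of x y])
  then show ?thesis
    using assms by linarith
qed

lemma firm_imp_norm_le:
  fixes x y :: "'a::real_inner"
  assumes "(norm y)\<^sup>2 \<le> y \<bullet> x"
  shows "norm y \<le> norm x"
proof (rule power2_le_imp_le)
  show "(norm y)\<^sup>2 \<le> (norm x)\<^sup>2"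
    using firm_norm_diff_le[OF assms] zero_le_power2[of "norm (y - x)"] by linarith
qed simp

lemma firm_norm_eq_imp_eq:
  fixes x y :: "'a::real_inner"
  assumes "(norm y)\<^sup>2 \<le> y \<bullet> x" and "norm y = norm x"
  shows "y = x"
  using firm_norm_diff_le[OF assms(1)] assms(2) by simp

lemma nonexpansive_linear_inner_fixed:
  fixes M :: "'a::euclidean_space \<Rightarrow> 'a"
  assumes lin: "linear M" and nonexp: "\<And>x. norm (M x) \<le> norm x" and fixed: "M f = f"
  shows "M x \<bullet> f = x \<bullet> f"
proof -
  let ?g = "adjoint M f"
  have adj: "M x \<bullet> y = x \<bullet> adjoint M y" for x y
    using adjoint_works[OF lin] by simp
  have "norm ?g * norm ?g = M ?g \<bullet> f"
    by (simp add: adj norm_eq_sqrt_inner)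
  also have "\<dots> \<le> norm ?g * norm f"
    using norm_cauchy_schwarz[of "M ?g" f] mult_right_mono[OF nonexp[of ?g] norm_ge_zero[of f]]
    by linarith
  finally have "norm ?g \<le> norm f"
    by (cases "?g = 0") simp_all
  moreover have "?g \<bullet> f = (norm f)\<^sup>2"
    using adj[of f f] fixed by (simp add: inner_commute power2_norm_eq_inner)
  ultimately have "(norm (?g - f))\<^sup>2 \<le> 0"
    by (simp add: power2_norm_eq_inner inner_diff inner_commute[of f ?g] norm_le[symmetric])
  then show ?thesis
    by (simp add: adj)
qed

lemma closest_point_subspace_orthogonal:
  fixes F :: "'a::euclidean_space set"
  assumes F: "subspace F" and f: "f \<in> F"
  shows "(x - closest_point F x) \<bullet> f = 0"
proof -
  let ?p = "closest_point F x"
  have p: "?p \<in> F"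
    using closest_point_in_set[OF closed_subspace[OF F]] F subspace_0 by blast
  have "?p + f \<in> F" "?p - f \<in> F"
    using p f F by (auto simp: subspace_add subspace_diff)
  then have "(x - ?p) \<bullet> ((?p + f) - ?p) \<le> 0" "(x - ?p) \<bullet> ((?p - f) - ?p) \<le> 0"
    using closest_point_dot[OF subspace_imp_convex[OF F] closed_subspace[OF F]] by blast+
  then show ?thesis
    by (simp add: inner_minus_right)
qed

lemma linear_strict_contraction_uniform:
  fixes M :: "'a::euclidean_space \<Rightarrow> 'a"
  assumes lin: "linear M" and W: "subspace W"
    and strict: "\<And>x. x \<in> W \<Longrightarrow> x \<noteq> 0 \<Longrightarrow> norm (M x) < norm x"
  obtains c where "0 \<le> c" "c < 1" "\<And>x. x \<in> W \<Longrightarrow> norm (M x) \<le> c * norm x"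
proof (cases "W \<inter> sphere 0 1 = {}")
  case True
  have "x = 0" if "x \<in> W" for x
  proof (rule ccontr)
    assume "x \<noteq> 0"
    then have "(1 / norm x) *\<^sub>R x \<in> W \<inter> sphere 0 1"
      using that W by (simp add: subspace_scale)
    with True show False by auto
  qed
  then show ?thesis
    using that[of 0] linear_0[OF lin] by auto
next
  case False
  have "compact (W \<inter> sphere 0 1)"
    by (rule closed_Int_compact[OF closed_subspace[OF W] compact_sphere])
  moreover have "continuous_on (W \<inter> sphere 0 1) (\<lambda>x. norm (M x))"
    by (intro continuous_intros linear_continuous_on linear_conv_bounded_linear[THEN iffD1, OF lin])
  ultimately obtain u where u: "u \<in> W" "norm u = 1"
    and max: "\<And>y. y \<in> W \<Longrightarrow> norm y = 1 \<Longrightarrow> norm (M y) \<le> norm (M u)"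
    using continuous_attains_sup[OF _ False] by (metis IntD1 IntD2 IntI mem_sphere_0)
  show ?thesis
  proof (rule that)
    show "norm (M u) < 1"
      using strict[OF u(1)] u(2) by fastforce
    fix x assume x: "x \<in> W"
    show "norm (M x) \<le> norm (M u) * norm x"
    proof (cases "x = 0")
      case True
      then show ?thesis using linear_0[OF lin] by simp
    next
      case False
      then have "norm (M ((1 / norm x) *\<^sub>R x)) \<le> norm (M u)"
        using x W max by (simp add: subspace_scale)
      then show ?thesis
        using False by (simp add: linear_scale[OF lin] divide_le_eq mult.commute)
    qed
  qed simp
qed

lemma linear_funpow:
  fixes M :: "'a::real_vector \<Rightarrow> 'a"
  assumes "linear M"
  shows "linear (M ^^ k)"
proof (induction k)
  case 0
  then show ?case
    by (simp add: linear_iff funpow_0)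
next
  case (Suc k)
  then show ?case
    unfolding funpow.simps(2) by (rule linear_compose[OF _ assms])
qed

lemma linear_firm_funpow_converges:
  fixes M :: "'a::euclidean_space \<Rightarrow> 'a"
  assumes lin: "linear M" and S: "subspace S" and MS: "\<And>x. x \<in> S \<Longrightarrow> M x \<in> S"
    and firm: "\<And>x. (norm (M x))\<^sup>2 \<le> M x \<bullet> x"
  obtains c where "0 \<le> c" "c < 1"
    "\<And>k x. x \<in> S \<Longrightarrow> norm ((M ^^ k) x - closest_point {x \<in> S. M x = x} x) \<le> c ^ k * norm x"
proof -
  define F where "F = {x \<in> S. M x = x}"
  define W where "W = {x \<in> S. \<forall>f\<in>F. x \<bullet> f = 0}"
  have F: "subspace F"
    using S unfolding subspace_def F_def
    by (auto simp: linear_add[OF lin] linear_scale[OF lin] linear_0[OF lin])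
  have W: "subspace W"
    using S unfolding W_def subspace_def by (auto simp: inner_add_left)
  have nonexp: "norm (M x) \<le> norm x" for x
    by (rule firm_imp_norm_le[OF firm])
  have MW: "M x \<in> W" if "x \<in> W" for x
    using that MS nonexpansive_linear_inner_fixed[OF lin nonexp] unfolding W_def F_def by auto
  have "norm (M x) < norm x" if x: "x \<in> W" "x \<noteq> 0" for x
  proof (rule ccontr)
    assume "\<not> norm (M x) < norm x"
    then have "M x = x"
      using firm_norm_eq_imp_eq[OF firm] nonexp[of x] by force
    then have "x \<bullet> x = 0"
      using x unfolding W_def F_def by auto
    with x show False by simp
  qed
  then obtain c where c: "0 \<le> c" "c < 1" and cW: "\<And>x. x \<in> W \<Longrightarrow> norm (M x) \<le> c * norm x"
    using linear_strict_contraction_uniform[OF lin W] by blast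
  have iter: "(M ^^ k) y \<in> W \<and> norm ((M ^^ k) y) \<le> c ^ k * norm y" if "y \<in> W" for y k
  proof (induction k)
    case (Suc k)
    have "norm ((M ^^ Suc k) y) \<le> c * norm ((M ^^ k) y)"
      using cW Suc by simp
    also have "\<dots> \<le> c * (c ^ k * norm y)"
      using Suc c(1) by (simp add: mult_left_mono)
    finally show ?case
      using MW Suc by (simp add: mult.assoc)
  qed (use that in simp)
  have fixed: "(M ^^ k) f = f" if "f \<in> F" for f k
    using that unfolding F_def by (induction k) auto
  show ?thesis
  proof (rule that[OF c])
    fix k x assume x: "x \<in> S"
    define p where "p = closest_point F x"
    have p: "p \<in> F"
      unfolding p_def using closest_point_in_set[OF closed_subspace[OF F]] F subspace_0 by blast
    have "x - p \<in> W"
      using x p S closest_point_subspace_orthogonal[OF F] unfolding W_def p_def F_def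
      by (auto simp: subspace_diff)
    have "(M ^^ k) x - p = (M ^^ k) (x - p)"
      using linear_add[OF linear_funpow[OF lin], of k "x - p" p] fixed[OF p] by simp
    then have "norm ((M ^^ k) x - p) \<le> c ^ k * norm (x - p)"
      using iter[OF \<open>x - p \<in> W\<close>] by simp
    also have "\<dots> \<le> c ^ k * norm x"
      using closest_point_le[OF closed_subspace[OF F] subspace_0[OF F], of x] c(1)
      unfolding p_def by (simp add: dist_norm mult_left_mono)
    finally show "norm ((M ^^ k) x - closest_point {x \<in> S. M x = x} x) \<le> c ^ k * norm x"
      unfolding p_def F_def .
  qed
qed

section \<open>Douglas--Rachford operators\<close>

definition orthogonal_projector :: "('a::real_inner \<Rightarrow> 'a) \<Rightarrow> bool" where
  "orthogonal_projector P \<longleftrightarrow> (\<forall>x. P (P x) = P x) \<and> (\<forall>x y. P x \<bullet> y = x \<bullet> P y)"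

lemma orthogonal_projectorI:
  assumes "\<And>x. P (P x) = P x" and "\<And>x y. P x \<bullet> y = x \<bullet> P y"
  shows "orthogonal_projector P"
  using assms unfolding orthogonal_projector_def by blast

lemma orthogonal_projectorD:
  assumes "orthogonal_projector P"
  shows orthogonal_projector_idem: "P (P x) = P x"
    and orthogonal_projector_self_adjoint: "P x \<bullet> y = x \<bullet> P y"
  using assms unfolding orthogonal_projector_def by blast+

lemma orthogonal_projector_linear:
  assumes P: "orthogonal_projector P"
  shows "linear P"
proof
  fix x y :: 'a and c :: real
  show "P (x + y) = P x + P y"
    by (rule vector_eq_rdot[THEN iffD1])
      (simp add: orthogonal_projector_self_adjoint[OF P] inner_add_left inner_add_right)
  show "P (c *\<^sub>R x) = c *\<^sub>R P x"
    by (rule vector_eq_rdot[THEN iffD1]) (simp add: orthogonal_projector_self_adjoint[OF P])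
qed

lemma orthogonal_projector_norm_reflection:
  assumes P: "orthogonal_projector P"
  shows "norm (2 *\<^sub>R P x - x) = norm x"
proof -
  have "P x \<bullet> x = P x \<bullet> P x"
    using orthogonal_projector_self_adjoint[OF P, of x "P x"] orthogonal_projector_idem[OF P]
    by (simp add: inner_commute)
  then show ?thesis
    by (simp add: norm_eq_sqrt_inner inner_diff inner_commute algebra_simps)
qed

definition douglas_rachford :: "('a::real_vector \<Rightarrow> 'a) \<Rightarrow> ('a \<Rightarrow> 'a) \<Rightarrow> 'a \<Rightarrow> 'a" where
  "douglas_rachford P D x = P (x - D x) + (D x - P (D x))"

lemma linear_douglas_rachford:
  assumes "linear P" and "linear D"
  shows "linear (douglas_rachford P D)"
  unfolding douglas_rachford_def[abs_def]
  by (intro linear_compose_add linear_compose_sub linear_compose[unfolded o_def, OF _ assms(1)]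
      linear_ident assms(2))

lemma douglas_rachford_reflection_eq:
  assumes "linear P"
  shows "2 *\<^sub>R douglas_rachford P D x - x = - (2 *\<^sub>R P (2 *\<^sub>R D x - x) - (2 *\<^sub>R D x - x))"
  by (simp add: douglas_rachford_def linear_add[OF assms] linear_diff[OF assms]
      linear_scale[OF assms] algebra_simps scaleR_2 del: scaleR_add_right)

lemma douglas_rachford_firm:
  assumes P: "orthogonal_projector P" and D: "(norm (D x))\<^sup>2 \<le> D x \<bullet> x"
  shows "(norm (douglas_rachford P D x))\<^sup>2 \<le> douglas_rachford P D x \<bullet> x"
proof -
  have "norm (2 *\<^sub>R douglas_rachford P D x - x) = norm (2 *\<^sub>R D x - x)"
    using douglas_rachford_reflection_eq[OF orthogonal_projector_linear[OF P], of D x]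
      orthogonal_projector_norm_reflection[OF P, of "2 *\<^sub>R D x - x"]
    by (simp only: norm_minus_cancel)
  also have "\<dots> \<le> norm x"
    using D by (simp add: firm_iff_norm_reflection_le)
  finally show ?thesis
    by (simp add: firm_iff_norm_reflection_le)
qed

lemma douglas_rachford_fixed_norm_reflection:
  assumes P: "orthogonal_projector P" and fixed: "douglas_rachford P D x = x"
  shows "norm (2 *\<^sub>R D x - x) = norm x"
proof -
  have "norm (2 *\<^sub>R D x - x) = norm (2 *\<^sub>R P (2 *\<^sub>R D x - x) - (2 *\<^sub>R D x - x))"
    by (rule orthogonal_projector_norm_reflection[OF P, symmetric])
  also have "\<dots> = norm (2 *\<^sub>R x - x)"
    using douglas_rachford_reflection_eq[OF orthogonal_projector_linear[OF P], of D x]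
    unfolding fixed by (simp only: norm_minus_cancel)
  also have "\<dots> = norm x"
    by (simp add: scaleR_2)
  finally show ?thesis .
qed

lemma douglas_rachford_fixed_iff:
  assumes P: "orthogonal_projector P" and "D x = a" and "x = a + b"
  shows "douglas_rachford P D x = x \<longleftrightarrow> P a = 0 \<and> P b = b"
proof -
  note lin = orthogonal_projector_linear[OF P]
  have "douglas_rachford P D x = x \<longleftrightarrow> P a = P b - b"
    using assms(2,3) by (auto simp: douglas_rachford_def algebra_simps)
  moreover have "P a = 0" if "P a = P b - b"
  proof -
    have "P a \<bullet> P a = a \<bullet> P (P b - b)"
      using orthogonal_projector_self_adjoint[OF P, of a "P a"] that by simp
    also have "\<dots> = 0"
      by (simp add: linear_diff[OF lin] orthogonal_projector_idem[OF P])
    finally show ?thesis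
      by simp
  qed
  ultimately show ?thesis
    by auto
qed

section \<open>Conjugation, Hadamard multipliers and the projector onto the range of \<open>A\<^sup>*\<close>\<close>

lemma matrix_add_rdistrib: "((B::'a::semiring_1^'n^'m) + C) ** A = B ** A + C ** A"
  by (simp add: matrix_matrix_mult_def vec_eq_iff sum.distrib algebra_simps)

lemma linear_matrix_conj: "linear (\<lambda>K. (Q::real^'k^'n) ** K ** transpose P)"
  by (rule linearI) (simp_all add: matrix_add_ldistrib matrix_add_rdistrib matrix_scalar_ac
      scalar_matrix_assoc[symmetric])

lemma inner_matrix_trace: "(X::real^'n^'m) \<bullet> Y = trace (transpose X ** Y)"
  unfolding inner_vec_def trace_def matrix_matrix_mult_def transpose_def
  by (simp, subst sum.swap, simp)

lemma frob_inner_eq_inner: "transpose X = X \<Longrightarrow> frob_inner X Y = X \<bullet> Y"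
  unfolding frob_inner_def inner_matrix_trace by simp

lemma inner_matrix_conj:
  "((Q::real^'k^'n) ** K ** transpose Q) \<bullet> G = K \<bullet> (transpose Q ** G ** Q)"
proof -
  have "(Q ** K ** transpose Q) \<bullet> G = trace (Q ** (transpose K ** transpose Q ** G))"
    unfolding inner_matrix_trace by (simp add: matrix_transpose_mul matrix_mul_assoc)
  also have "\<dots> = trace ((transpose K ** transpose Q ** G) ** Q)"
    by (rule trace_mul_sym)
  also have "\<dots> = K \<bullet> (transpose Q ** G ** Q)"
    unfolding inner_matrix_trace by (simp add: matrix_mul_assoc)
  finally show ?thesis .
qed

lemma orthogonal_matrix_conj_conj:
  assumes "orthogonal_matrix (Q::real^'n^'n)"
  shows "transpose Q ** (Q ** K ** transpose Q) ** Q = K"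
proof -
  have "transpose Q ** (Q ** K ** transpose Q) ** Q = (transpose Q ** Q) ** K ** (transpose Q ** Q)"
    by (simp add: matrix_mul_assoc)
  then show ?thesis
    using assms by (simp add: orthogonal_matrix_def)
qed

lemma orthogonal_matrix_conj_conj':
  assumes "orthogonal_matrix (Q::real^'n^'n)"
  shows "Q ** (transpose Q ** H ** Q) ** transpose Q = H"
  using orthogonal_matrix_conj_conj[of "transpose Q" H] assms by simp

lemma norm_orthogonal_matrix_conj:
  assumes "orthogonal_matrix (Q::real^'n^'n)"
  shows "norm (Q ** K ** transpose Q) = norm K"
  using inner_matrix_conj[of Q K "Q ** K ** transpose Q"] orthogonal_matrix_conj_conj[OF assms]
  by (simp add: norm_eq_sqrt_inner)

lemma subspace_Sym: "subspace Sym"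
  unfolding subspace_def Sym_def
  by (simp add: transpose_def vec_eq_iff transpose_scalar)

lemma Sym_conj: "H \<in> Sym \<Longrightarrow> (Q::real^'k^'n) ** H ** transpose Q \<in> Sym"
  unfolding Sym_def by (simp add: matrix_transpose_mul matrix_mul_assoc)

lemma hadamard_firm:
  assumes W: "\<And>i j. 0 \<le> W$i$j \<and> W$i$j \<le> 1"
  shows "(norm (hadamard W K))\<^sup>2 \<le> hadamard W K \<bullet> K"
proof -
  have "(W$i$j * K$i$j) * (W$i$j * K$i$j) \<le> (W$i$j * K$i$j) * K$i$j" for i j
  proof -
    have "W$i$j * W$i$j \<le> W$i$j"
      using W[of i j] by (simp add: mult_left_le)
    then show ?thesis
      using mult_right_mono[of "W$i$j * W$i$j" "W$i$j" "K$i$j * K$i$j"] by (simp add: mult_ac)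
  qed
  then show ?thesis
    unfolding power2_norm_eq_inner inner_vec_def hadamard_def
    by (simp add: sum_mono)
qed

lemma hadamard_norm_reflection_eq_imp_zero:
  assumes W: "\<And>i j. 0 \<le> W$i$j \<and> W$i$j \<le> 1"
    and eq: "norm (2 *\<^sub>R hadamard W K - K) = norm K"
    and strict: "0 < W$i$j" "W$i$j < 1"
  shows "K$i$j = 0"
proof -
  define t where "t i j = 4 * (W$i$j * (1 - W$i$j)) * (K$i$j)\<^sup>2" for i j
  have t: "0 \<le> t i j" for i j
    using W[of i j] unfolding t_def by simp
  have "(norm K)\<^sup>2 - (norm (2 *\<^sub>R hadamard W K - K))\<^sup>2 = (\<Sum>i\<in>UNIV. \<Sum>j\<in>UNIV. t i j)"
    unfolding power2_norm_eq_inner inner_vec_def t_def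
    by (simp add: hadamard_def sum_subtractf[symmetric] power2_eq_square algebra_simps)
  then have "(\<Sum>i\<in>UNIV. \<Sum>j\<in>UNIV. t i j) = 0"
    using eq by simp
  then have "t i j = 0"
    by (simp add: sum_nonneg_eq_0_iff sum_nonneg t)
  then show ?thesis
    using strict unfolding t_def by simp
qed

lemma Omega_bounds: "0 \<le> Omega lam $ i $ j \<and> Omega lam $ i $ j \<le> 1"
  by (auto simp: Omega_def divide_le_eq_1 divide_nonneg_pos)

lemma Omega_strict: "lam i < 0 \<Longrightarrow> 0 < lam j \<Longrightarrow> 0 < Omega lam $ i $ j \<and> Omega lam $ i $ j < 1"
  by (simp add: Omega_def)

lemma Omega_symmetric: "transpose (Omega lam) = Omega lam"
proof -
  have "Omega lam $ j $ i = Omega lam $ i $ j" for i j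
    unfolding Omega_def
    by (cases "0 < lam i"; cases "0 < lam j"; cases "lam i < 0"; cases "lam j < 0") simp_all
  then show ?thesis
    by (simp add: transpose_def vec_eq_iff)
qed

lemma linear_hadamard: "linear (hadamard W)"
  by (rule linearI) (simp_all add: hadamard_def vec_eq_iff algebra_simps)

lemma hadamard_Sym: "W \<in> Sym \<Longrightarrow> K \<in> Sym \<Longrightarrow> hadamard W K \<in> Sym"
  unfolding Sym_def by (simp add: hadamard_def transpose_def vec_eq_iff)

lemma Dop_linear: "linear (Dop Q lam)"
proof -
  have "Dop Q lam = (\<lambda>K. Q ** K ** transpose Q) \<circ> hadamard (Omega lam)
      \<circ> (\<lambda>H. transpose Q ** H ** transpose (transpose Q))"
    by (simp add: fun_eq_iff Dop_def)
  then show ?thesis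
    by (simp only:) (intro linear_compose linear_matrix_conj linear_hadamard)
qed

lemma Dop_Sym: "H \<in> Sym \<Longrightarrow> Dop Q lam H \<in> Sym"
  unfolding Dop_def
  using Sym_conj[of H "transpose Q"] Omega_symmetric[of lam]
  by (intro Sym_conj hadamard_Sym) (auto simp: Sym_def)

lemma Dop_firm:
  assumes "orthogonal_matrix Q"
  shows "(norm (Dop Q lam H))\<^sup>2 \<le> Dop Q lam H \<bullet> H"
  using hadamard_firm[OF Omega_bounds, of lam "transpose Q ** H ** Q"]
  unfolding Dop_def inner_matrix_conj norm_orthogonal_matrix_conj[OF assms] .

lemma invertible_matrix_inv:
  assumes "invertible G"
  shows matrix_inv_right: "G ** matrix_inv G = mat 1"
    and matrix_inv_left: "matrix_inv G ** G = mat 1"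
  using someI_ex[OF assms[unfolded invertible_def]] unfolding matrix_inv_def by auto

context
  fixes A :: "'m::finite \<Rightarrow> real^'n^'n"
  assumes A_sym: "\<And>i. A i \<in> Sym"
begin

lemma Aop_eq_inner: "Aop A H = (\<chi> i. A i \<bullet> H)"
  unfolding Aop_def using A_sym by (simp add: frob_inner_eq_inner Sym_def)

lemma inner_Astar: "Astar A y \<bullet> H = y \<bullet> Aop A H"
  unfolding Astar_def Aop_eq_inner inner_sum_left inner_scaleR_left
  by (simp add: inner_vec_def[of y])

lemma Astar_Sym: "Astar A y \<in> Sym"
  unfolding Astar_def using A_sym by (intro subspace_sum[OF subspace_Sym] subspace_scale[OF subspace_Sym])

lemma Aop_Astar: "Aop A (Astar A y) = AAstar A *v y"
  using A_sym by (simp add: Aop_eq_inner AAstar_def frob_inner_eq_inner Sym_def vec_eq_iff Astar_def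
      inner_sum_right matrix_vector_mult_def mult.commute)

lemma AAstar_symmetric: "transpose (AAstar A) = AAstar A"
  using A_sym by (simp add: AAstar_def frob_inner_eq_inner Sym_def transpose_def vec_eq_iff inner_commute)

context
  assumes A_surj: "Aop A ` Sym = UNIV"
begin

lemma AAstar_invertible: "invertible (AAstar A)"
proof -
  have "y = 0" if "AAstar A *v y = 0" for y
  proof -
    have "Astar A y \<bullet> Astar A y = 0"
      using that by (simp add: inner_Astar Aop_Astar)
    moreover obtain H where "Aop A H = y"
      using A_surj by (metis UNIV_I imageE)
    ultimately show "y = 0"
      using inner_Astar[of y H] by simp
  qed
  then show ?thesis
    using matrix_left_invertible_ker invertible_left_inverse by blast
qed

lemma Aop_Pop: "Aop A (Pop A H) = Aop A H"
  using matrix_inv_right[OF AAstar_invertible]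
  by (simp add: Pop_def Aop_Astar matrix_vector_mul_assoc)

lemma orthogonal_projector_Pop: "orthogonal_projector (Pop A)"
proof (rule orthogonal_projectorI)
  show "Pop A (Pop A H) = Pop A H" for H
    by (simp add: Pop_def Aop_Pop[unfolded Pop_def])
  let ?G = "AAstar A"
  have range: "Aop A H = ?G *v (matrix_inv ?G *v Aop A H)" for H
    using Aop_Pop[of H] by (simp add: Pop_def Aop_Astar)
  show "Pop A H \<bullet> K = H \<bullet> Pop A K" for H K
  proof -
    let ?u = "matrix_inv ?G *v Aop A H" and ?v = "matrix_inv ?G *v Aop A K"
    have "Pop A H \<bullet> K = ?u \<bullet> (?G *v ?v)"
      by (simp add: Pop_def inner_Astar flip: range)
    also have "\<dots> = (?G *v ?u) \<bullet> ?v"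
      by (metis dot_lmul_matrix transpose_matrix_vector AAstar_symmetric)
    also have "\<dots> = Aop A H \<bullet> ?v"
      by (simp flip: range)
    also have "\<dots> = H \<bullet> Pop A K"
      unfolding Pop_def by (metis inner_Astar inner_commute)
    finally show ?thesis .
  qed
qed

lemma Pop_eq_0_iff: "Pop A H = 0 \<longleftrightarrow> Aop A H = 0"
proof
  assume "Pop A H = 0"
  have "Aop A H = Aop A (Pop A H)"
    by (rule Aop_Pop[symmetric])
  also have "\<dots> = 0"
    by (simp add: \<open>Pop A H = 0\<close> Aop_def frob_inner_def trace_def vec_eq_iff)
  finally show "Aop A H = 0" .
qed (simp add: Pop_def Astar_def)

lemma Pop_eq_self_iff: "Pop A H = H \<longleftrightarrow> (\<exists>y. H = Astar A y)"
proof
  assume "Pop A H = H"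
  then show "\<exists>y. H = Astar A y"
    unfolding Pop_def by metis
next
  assume "\<exists>y. H = Astar A y"
  then show "Pop A H = H"
    using matrix_inv_left[OF AAstar_invertible]
    by (auto simp: Pop_def Aop_Astar matrix_vector_mul_assoc)
qed

end

lemma Pop_Sym: "Pop A H \<in> Sym"
  unfolding Pop_def by (rule Astar_Sym)

end

section \<open>Strict complementarity and the eigenvalues of \<open>Z\<^sub>\<star>\<close>\<close>

lemma diagm_inner: "diagm d \<bullet> M = (\<Sum>i\<in>UNIV. d i * M$i$i)"
  by (simp add: inner_vec_def diagm_def if_distrib if_distribR cong: if_cong)

lemma psd_inner_conj_diagm_nonneg:
  assumes "psd Y" "\<And>i. 0 \<le> d i"
  shows "0 \<le> Y \<bullet> ((Q::real^'n^'n) ** diagm d ** transpose Q)"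
proof -
  have diag: "(transpose Q ** Y ** Q)$i$i = column i Q \<bullet> (Y *v column i Q)" for i
    by (simp add: matrix_matrix_mult_def matrix_vector_mult_def transpose_def column_def
        inner_vec_def sum_distrib_left sum_distrib_right mult_ac) (subst sum.swap, simp add: mult_ac)
  have "Y \<bullet> (Q ** diagm d ** transpose Q) = (\<Sum>i\<in>UNIV. d i * (column i Q \<bullet> (Y *v column i Q)))"
    by (simp add: inner_commute[of Y] inner_matrix_conj diagm_inner diag)
  also have "\<dots> \<ge> 0"
    using assms unfolding psd_def by (intro sum_nonneg mult_nonneg_nonneg) auto
  finally show ?thesis .
qed

lemma rank_conj_diagm_le:
  assumes "\<And>i. d i \<noteq> 0 \<Longrightarrow> i \<in> I"
  shows "rank ((Q::real^'n^'n) ** diagm d ** transpose Q) \<le> card I"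
proof -
  have "range (\<lambda>x. (Q ** diagm d ** transpose Q) *v x) \<subseteq> span ((\<lambda>i. column i Q) ` I)"
  proof clarify
    fix x
    define w where "w = diagm d *v (transpose Q *v x)"
    have w0: "w $ i = 0" if "i \<notin> I" for i
      using assms[of i] that
      by (auto simp: w_def diagm_def matrix_vector_mult_def if_distrib if_distribR cong: if_cong)
    have "(Q ** diagm d ** transpose Q) *v x = Q *v w"
      by (simp only: w_def matrix_vector_mul_assoc matrix_mul_assoc)
    also have "\<dots> = (\<Sum>i\<in>UNIV. w$i *s column i Q)"
      by (rule matrix_mult_sum)
    also have "\<dots> = (\<Sum>i\<in>I. w$i *s column i Q)"
      by (rule sum.mono_neutral_right) (auto simp: w0)
    also have "\<dots> \<in> span ((\<lambda>i. column i Q) ` I)"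
      by (intro span_sum) (simp add: scalar_mult_eq_scaleR span_scale span_base)
    finally show "(Q ** diagm d ** transpose Q) *v x \<in> span ((\<lambda>i. column i Q) ` I)" .
  qed
  then have "dim (range (\<lambda>x. (Q ** diagm d ** transpose Q) *v x)) \<le> card ((\<lambda>i. column i Q) ` I)"
    by (intro dim_le_card) auto
  also have "\<dots> \<le> card I"
    by (rule card_image_le) simp
  finally show ?thesis
    by (simp add: rank_dim_range)
qed

text \<open>\<open>Xs\<close> and \<open>sigma Ss\<close> turn out to be the positive and negative parts of \<open>Z\<close>, so a zero
eigenvalue would leave \<open>rank Xs + rank Ss < n\<close>.\<close>

lemma strict_complementarity_eigenvalues_nonzero:
  fixes Xs Ss Q :: "real^'n^'n" and lam :: "'n \<Rightarrow> real" and sigma :: real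
  assumes psdX: "psd Xs" and psdS: "psd Ss" and compl: "frob_inner Xs Ss = 0"
    and strict: "rank Xs + rank Ss = CARD('n)" and sigma: "0 < sigma"
    and Q: "orthogonal_matrix Q" and Z: "Xs - sigma *\<^sub>R Ss = Q ** diagm lam ** transpose Q"
  shows "lam k \<noteq> 0"
proof
  assume "lam k = 0"
  define Pos where "Pos = Q ** diagm (\<lambda>i. max (lam i) 0) ** transpose Q"
  define Neg where "Neg = Q ** diagm (\<lambda>i. max (- lam i) 0) ** transpose Q"
  have "diagm lam = diagm (\<lambda>i. max (lam i) 0) - diagm (\<lambda>i. max (- lam i) 0)"
    by (auto simp: diagm_def vec_eq_iff max_def)
  then have "Xs - sigma *\<^sub>R Ss = Pos - Neg"
    using Z linear_diff[OF linear_matrix_conj] by (simp add: Pos_def Neg_def)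
  then have E: "Xs - Pos = sigma *\<^sub>R Ss - Neg"
    by (simp add: algebra_simps)
  have "Pos \<bullet> Neg = diagm (\<lambda>i. max (lam i) 0) \<bullet> diagm (\<lambda>i. max (- lam i) 0)"
    unfolding Pos_def Neg_def inner_matrix_conj orthogonal_matrix_conj_conj[OF Q] ..
  also have "\<dots> = 0"
    by (simp only: diagm_inner) (auto simp: diagm_def max_def intro!: sum.neutral)
  finally have "Pos \<bullet> Neg = 0" .
  moreover have "Xs \<bullet> Ss = 0"
    using compl psdX by (simp add: psd_def frob_inner_eq_inner)
  moreover have "0 \<le> Xs \<bullet> Neg"
    unfolding Neg_def using psdX by (auto intro: psd_inner_conj_diagm_nonneg)
  moreover have "0 \<le> sigma * (Ss \<bullet> Pos)"
    unfolding Pos_def using psdS sigma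
    by (intro mult_nonneg_nonneg psd_inner_conj_diagm_nonneg) auto
  ultimately have "(Xs - Pos) \<bullet> (sigma *\<^sub>R Ss - Neg) \<le> 0"
    by (simp add: inner_diff inner_commute)
  then have "(Xs - Pos) \<bullet> (Xs - Pos) \<le> 0"
    unfolding E .
  then have "Xs = Pos"
    using inner_ge_zero[of "Xs - Pos"] by simp
  then have "Ss = (1 / sigma) *\<^sub>R Neg"
    using E sigma by auto
  also have "\<dots> = Q ** diagm (\<lambda>i. max (- lam i) 0 / sigma) ** transpose Q"
    unfolding Neg_def linear_scale[OF linear_matrix_conj, symmetric]
    by (rule arg_cong[where f="\<lambda>D. Q ** D ** transpose Q"]) (simp add: diagm_def vec_eq_iff)
  finally have Ss: "Ss = Q ** diagm (\<lambda>i. max (- lam i) 0 / sigma) ** transpose Q" .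
  have "rank Xs \<le> card {i. 0 < lam i}"
    unfolding \<open>Xs = Pos\<close> Pos_def by (rule rank_conj_diagm_le) (simp add: max_def split: if_splits)
  moreover have "rank Ss \<le> card {i. lam i < 0}"
    unfolding Ss by (rule rank_conj_diagm_le) (simp add: max_def split: if_splits)
  moreover have "card {i. 0 < lam i} + card {i. lam i < 0} = card ({i. 0 < lam i} \<union> {i. lam i < 0})"
    by (rule card_Un_disjoint[symmetric]) auto
  moreover have "\<dots> \<le> card (UNIV - {k})"
    by (rule card_mono) (auto simp: \<open>lam k = 0\<close>)
  moreover have "card (UNIV - {k}) < CARD('n)"
    by (rule card_Diff1_less) simp_all
  ultimately show False
    using strict by linarith
qed

section \<open>The operator \<open>M\<close>\<close>

lemma blocks_decompose:
  assumes "blkO_zero lam K" and "transpose K = K" and "\<And>i. lam i \<noteq> 0"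
  shows "K = blkX lam K + blkS lam K"
proof -
  have "K$i$j = blkX lam K $i$j + blkS lam K $i$j" for i j
  proof -
    have "K$i$j = K$j$i"
      using arg_cong[OF assms(2), of "\<lambda>M. M $ j $ i"] by (simp add: transpose_def)
    then show ?thesis
      using assms(1) assms(3)[of i] assms(3)[of j] unfolding blkO_zero_def blkX_def blkS_def
      by (cases "lam i < 0"; cases "lam j < 0") (auto simp: not_less less_le)
  qed
  then show ?thesis
    by (simp add: vec_eq_iff)
qed

lemma hadamard_Omega_blkO_zero:
  assumes "blkO_zero lam K" and "transpose K = K"
  shows "hadamard (Omega lam) K = blkX lam K"
proof -
  have "Omega lam $i$j * K$i$j = blkX lam K $i$j" for i j
  proof -
    have "K$i$j = K$j$i"
      using arg_cong[OF assms(2), of "\<lambda>M. M $ j $ i"] by (simp add: transpose_def)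
    then show ?thesis
      using assms(1) unfolding blkO_zero_def blkX_def Omega_def by auto
  qed
  then show ?thesis
    by (simp add: vec_eq_iff hadamard_def)
qed

lemma blkO_zero_if_norm_reflection_eq:
  assumes "norm (2 *\<^sub>R hadamard (Omega lam) K - K) = norm K"
  shows "blkO_zero lam K"
  unfolding blkO_zero_def
  using hadamard_norm_reflection_eq_imp_zero[OF Omega_bounds assms] Omega_strict by blast

lemma opnormS_le:
  fixes T :: "real^'n^'n \<Rightarrow> real^'n^'n"
  assumes bound: "\<And>H. H \<in> Sym \<Longrightarrow> norm (T H) \<le> c * norm H" and "0 \<le> c"
  shows "opnormS T \<le> c" and opnormS_nonneg: "0 \<le> opnormS T"
proof -
  have ratio: "norm (T H) / norm H \<le> c" if "H \<in> Sym" for H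
    using bound[OF that] \<open>0 \<le> c\<close> by (cases "H = 0") (auto simp: divide_le_eq mult.commute)
  have "0 \<in> Sym"
    by (rule subspace_0[OF subspace_Sym])
  then show "opnormS T \<le> c"
    unfolding opnormS_def by (intro cSUP_least ratio) auto
  have "bdd_above ((\<lambda>H. norm (T H) / norm H) ` Sym)"
    using ratio by (intro bdd_aboveI2[where M=c])
  with \<open>0 \<in> Sym\<close> show "0 \<le> opnormS T"
    unfolding opnormS_def by (intro cSUP_upper2) auto
qed

lemma Mop_eq_douglas_rachford: "Mop A Q lam = douglas_rachford (Pop A) (Dop Q lam)"
  by (simp add: fun_eq_iff Mop_def Dperp_def Pperp_def douglas_rachford_def)

lemma Mop_Sym:
  assumes "\<And>i. A i \<in> Sym" and "H \<in> Sym"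
  shows "Mop A Q lam H \<in> Sym"
  unfolding Mop_eq_douglas_rachford douglas_rachford_def
  by (intro subspace_add[OF subspace_Sym] subspace_diff[OF subspace_Sym] Pop_Sym Dop_Sym assms)

context
  fixes A :: "'m::finite \<Rightarrow> real^'n^'n"
  assumes A_sym: "\<And>i. A i \<in> Sym" and A_surj: "Aop A ` Sym = UNIV"
begin

lemma Mop_linear: "linear (Mop A Q lam)"
  unfolding Mop_eq_douglas_rachford
  by (intro linear_douglas_rachford orthogonal_projector_linear orthogonal_projector_Pop
      A_sym A_surj Dop_linear)

lemma Mop_firm:
  assumes "orthogonal_matrix Q"
  shows "(norm (Mop A Q lam H))\<^sup>2 \<le> Mop A Q lam H \<bullet> H"
  unfolding Mop_eq_douglas_rachford
  by (intro douglas_rachford_firm orthogonal_projector_Pop A_sym A_surj Dop_firm assms)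

lemma Mop_fixed_iff:
  assumes Q_orth: "orthogonal_matrix Q" and lam: "\<And>i. lam i \<noteq> 0" and H: "H \<in> Sym"
  defines "K \<equiv> transpose Q ** H ** Q"
  shows "Mop A Q lam H = H \<longleftrightarrow>
    blkO_zero lam K
    \<and> Aop A (Q ** blkX lam K ** transpose Q) = 0
    \<and> (\<exists>y. Q ** blkS lam K ** transpose Q = Astar A y)"
proof -
  note P = orthogonal_projector_Pop[OF A_sym A_surj]
  have K: "transpose K = K"
    using H by (simp add: K_def Sym_def matrix_transpose_mul matrix_mul_assoc)
  have HK: "H = Q ** K ** transpose Q"
    unfolding K_def by (rule orthogonal_matrix_conj_conj'[OF Q_orth, symmetric])
  have DK: "Dop Q lam H = Q ** hadamard (Omega lam) K ** transpose Q"
    by (simp add: Dop_def K_def)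
  have blocks: "Dop Q lam H = Q ** blkX lam K ** transpose Q"
    "H = Q ** blkX lam K ** transpose Q + Q ** blkS lam K ** transpose Q"
    if "blkO_zero lam K"
  proof -
    show "Dop Q lam H = Q ** blkX lam K ** transpose Q"
      by (simp only: DK hadamard_Omega_blkO_zero[OF that K])
    have "H = Q ** (blkX lam K + blkS lam K) ** transpose Q"
      using HK arg_cong[OF blocks_decompose[OF that K lam], of "\<lambda>K. Q ** K ** transpose Q"] by simp
    then show "H = Q ** blkX lam K ** transpose Q + Q ** blkS lam K ** transpose Q"
      by (simp add: linear_add[OF linear_matrix_conj])
  qed
  have "blkO_zero lam K" if fixed: "Mop A Q lam H = H"
  proof (rule blkO_zero_if_norm_reflection_eq)
    have "Q ** (2 *\<^sub>R hadamard (Omega lam) K - K) ** transpose Q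
        = 2 *\<^sub>R (Q ** hadamard (Omega lam) K ** transpose Q) - Q ** K ** transpose Q"
      by (simp add: linear_diff[OF linear_matrix_conj] linear_scale[OF linear_matrix_conj])
    also have "\<dots> = 2 *\<^sub>R Dop Q lam H - H"
      unfolding DK HK[symmetric] ..
    finally have reflection: "Q ** (2 *\<^sub>R hadamard (Omega lam) K - K) ** transpose Q
        = 2 *\<^sub>R Dop Q lam H - H" .
    have "norm (2 *\<^sub>R hadamard (Omega lam) K - K)
        = norm (Q ** (2 *\<^sub>R hadamard (Omega lam) K - K) ** transpose Q)"
      by (rule norm_orthogonal_matrix_conj[OF Q_orth, symmetric])
    also have "\<dots> = norm H"
      unfolding reflection
      by (rule douglas_rachford_fixed_norm_reflection[OF P fixed[unfolded Mop_eq_douglas_rachford]])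
    also have "\<dots> = norm K"
      unfolding HK by (rule norm_orthogonal_matrix_conj[OF Q_orth])
    finally show "norm (2 *\<^sub>R hadamard (Omega lam) K - K) = norm K" .
  qed
  moreover have "Mop A Q lam H = H \<longleftrightarrow>
      Aop A (Q ** blkX lam K ** transpose Q) = 0 \<and> (\<exists>y. Q ** blkS lam K ** transpose Q = Astar A y)"
    if "blkO_zero lam K"
    unfolding Mop_eq_douglas_rachford Pop_eq_0_iff[OF A_sym A_surj, symmetric]
      Pop_eq_self_iff[OF A_sym A_surj, symmetric]
    by (rule douglas_rachford_fixed_iff[where D = "Dop Q lam", OF P blocks[OF that]])
  ultimately show ?thesis
    by blast
qed

end

theorem proposition1:
  fixes A :: "'m::finite \<Rightarrow> real^'n^'n"
    and b :: "real^'m" and C :: "real^'n^'n"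
    and Xs Ss :: "real^'n^'n" and ys :: "real^'m" and sigma :: real
    and Q :: "real^'n^'n" and lam :: "'n \<Rightarrow> real"
  assumes A_sym: "\<And>i. A i \<in> Sym"
    and A_surj: "Aop A ` Sym = UNIV"
    and C_sym: "C \<in> Sym"
    and primal: "Aop A Xs = b" "psd Xs"
    and dual: "Astar A ys + Ss = C" "psd Ss"
    and compl: "frob_inner Xs Ss = 0"
    and strict: "rank Xs + rank Ss = CARD('n)"
    and sigma_pos: "0 < sigma"
    and Q_orth: "orthogonal_matrix Q"
    and Z_eig: "Xs - sigma *\<^sub>R Ss = Q ** diagm lam ** transpose Q"
  shows "(\<forall>H\<in>Sym. frob_inner (Mop A Q lam H) H \<ge> (norm (Mop A Q lam H))\<^sup>2)
    \<and> ((\<lambda>k. opnormS (\<lambda>H. (Mop A Q lam ^^ k) H - closest_point (FixM A Q lam) H))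
          \<longlonglongrightarrow> 0)
    \<and> (\<forall>H\<in>Sym. H \<in> FixM A Q lam \<longleftrightarrow>
          (blkO_zero lam (transpose Q ** H ** Q)
           \<and> Aop A (Q ** blkX lam (transpose Q ** H ** Q) ** transpose Q) = 0
           \<and> (\<exists>y. Q ** blkS lam (transpose Q ** H ** Q) ** transpose Q = Astar A y)))
    \<and> opnormS (\<lambda>H. Mop A Q lam H - closest_point (FixM A Q lam) H) < 1"
proof -
  let ?M = "Mop A Q lam" and ?F = "FixM A Q lam"
  have lam: "\<And>i. lam i \<noteq> 0"
    by (rule strict_complementarity_eigenvalues_nonzero[OF primal(2) dual(2) compl strict sigma_pos
          Q_orth Z_eig])
  have firm: "(norm (?M H))\<^sup>2 \<le> ?M H \<bullet> H" for H
    by (rule Mop_firm[OF A_sym A_surj Q_orth])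
  have Sym: "?M H \<in> Sym" if "H \<in> Sym" for H
    by (rule Mop_Sym[OF A_sym that])
  obtain c where c: "0 \<le> c" "c < 1"
    and conv: "\<And>k H. H \<in> Sym \<Longrightarrow> norm ((?M ^^ k) H - closest_point ?F H) \<le> c ^ k * norm H"
    using linear_firm_funpow_converges[OF Mop_linear[OF A_sym A_surj] subspace_Sym Sym firm]
    unfolding FixM_def by blast
  have opnorm: "0 \<le> opnormS (\<lambda>H. (?M ^^ k) H - closest_point ?F H)"
    "opnormS (\<lambda>H. (?M ^^ k) H - closest_point ?F H) \<le> c ^ k" for k
    using opnormS_le[of "\<lambda>H. (?M ^^ k) H - closest_point ?F H" "c ^ k"] conv c(1) by auto
  show ?thesis
  proof (intro conjI ballI)
    show "frob_inner (?M H) H \<ge> (norm (?M H))\<^sup>2" if "H \<in> Sym" for H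
      using firm[of H] Sym[OF that] by (simp add: frob_inner_eq_inner Sym_def)
    show "(\<lambda>k. opnormS (\<lambda>H. (?M ^^ k) H - closest_point ?F H)) \<longlonglongrightarrow> 0"
    proof (rule Lim_null_comparison)
      show "\<forall>\<^sub>F k in sequentially. norm (opnormS (\<lambda>H. (?M ^^ k) H - closest_point ?F H)) \<le> c ^ k"
        using opnorm by simp
      show "(\<lambda>k. c ^ k) \<longlonglongrightarrow> 0"
        using c by (intro LIMSEQ_power_zero) simp
    qed
    show "H \<in> ?F \<longleftrightarrow> blkO_zero lam (transpose Q ** H ** Q)
        \<and> Aop A (Q ** blkX lam (transpose Q ** H ** Q) ** transpose Q) = 0
        \<and> (\<exists>y. Q ** blkS lam (transpose Q ** H ** Q) ** transpose Q = Astar A y)" if "H \<in> Sym" for H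
      using Mop_fixed_iff[OF A_sym A_surj Q_orth lam that] that by (simp add: FixM_def)
    show "opnormS (\<lambda>H. ?M H - closest_point ?F H) < 1"
      using opnorm(2)[of 1] c(2) by simp
  qed
qed

end
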